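(* Let $\mathbb{L}=(\mathcal{P},\mathcal{C},\parallel)$ be a Laguerre plane satisfying axiom (C). If $K,L,M$ are circles which are pairwise tangent, then they are all tangent at one and the same point, i.e. there is a point $p$ such that any two of $K,L,M$ are tangent at $p$.
   Context: A Laguerre plane is a triple $(\mathcal{P},\mathcal{C},\parallel)$ where $\mathcal{P}$ is a set of points, $\mathcal{C}\subset 2^{\mathcal{P}}$ a set of circles and $\parallel$ an equivalence relation on $\mathcal{P}$ (parallelism; its classes are called generators) such that: (1) any three pairwise non-parallel points lie on a unique circle; (2) for every circle $K$ and non-parallel points $p\in K$, $q\notin K$ there is exactly one circle $L$ with $q\in L$ and $K\cap L=\{p\}$; (3) for every point $p$ and circle $K$ there is exactly one point $q\in K$ with $q\parallel p$; (4) some circle contains at least three but not all points. Circles $K,L$ are tangent at $p$ if $K\cap L=\{p\}$ or $K=L$ (with $p\in K$); $K,L$ are tangent if they are tangent at some point. For $p\in K$, $\langle p,K\rangle$ denotes the set of circles tangent to $K$ at $p$. Axiom (C): for any circles $K,L$ and any point $p\in K\setminus L$ there exists exactly one circle $M\in\langle p,K\rangle$ with $|M\cap L|=1$. *)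

theory Defs
  imports Main
begin

definition laguerre_plane :: "'p set \<Rightarrow> 'p set set \<Rightarrow> ('p \<Rightarrow> 'p \<Rightarrow> bool) \<Rightarrow> bool" where
  "laguerre_plane P C par \<longleftrightarrow>
     (\<forall>K\<in>C. K \<subseteq> P) \<and>
     equiv P {(x, y). x \<in> P \<and> y \<in> P \<and> par x y} \<and>
     \<comment> \<open>(1) three pairwise non-parallel points lie on a unique circle\<close>
     (\<forall>a\<in>P. \<forall>b\<in>P. \<forall>c\<in>P. \<not> par a b \<and> \<not> par a c \<and> \<not> par b c \<longrightarrow>
        (\<exists>!K. K \<in> C \<and> a \<in> K \<and> b \<in> K \<and> c \<in> K)) \<and>
     \<comment> \<open>(2) touching axiom\<close>
     (\<forall>K\<in>C. \<forall>p\<in>K. \<forall>q\<in>P. q \<notin> K \<and> \<not> par p q \<longrightarrow>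
        (\<exists>!L. L \<in> C \<and> q \<in> L \<and> K \<inter> L = {p})) \<and>
     \<comment> \<open>(3) each generator meets each circle in exactly one point\<close>
     (\<forall>p\<in>P. \<forall>K\<in>C. \<exists>!q. q \<in> K \<and> par q p) \<and>
     \<comment> \<open>(4) some circle contains at least three but not all points\<close>
     (\<exists>K\<in>C. (\<exists>a b c. a \<in> K \<and> b \<in> K \<and> c \<in> K \<and> a \<noteq> b \<and> a \<noteq> c \<and> b \<noteq> c) \<and> K \<noteq> P)"

definition tangent_at :: "'p set \<Rightarrow> 'p set \<Rightarrow> 'p \<Rightarrow> bool" where
  "tangent_at K L p \<longleftrightarrow> p \<in> K \<and> (K \<inter> L = {p} \<or> K = L)"

definition tangent :: "'p set \<Rightarrow> 'p set \<Rightarrow> bool" where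
  "tangent K L \<longleftrightarrow> (\<exists>p. tangent_at K L p)"

definition pencil :: "'p set set \<Rightarrow> 'p \<Rightarrow> 'p set \<Rightarrow> 'p set set" where
  "pencil C p K = {M \<in> C. tangent_at M K p}"

definition axiom_C :: "'p set \<Rightarrow> 'p set set \<Rightarrow> ('p \<Rightarrow> 'p \<Rightarrow> bool) \<Rightarrow> bool" where
  "axiom_C P C par \<longleftrightarrow>
     (\<forall>K\<in>C. \<forall>L\<in>C. \<forall>p\<in>K - L. \<exists>!M. M \<in> pencil C p K \<and> (\<exists>x. M \<inter> L = {x}))"

end

theory Submission
  imports Defs
begin

text \<open>If \<open>K \<noteq> L\<close> touch at \<open>a\<close> and \<open>a\<close> were not on \<open>M\<close>, then \<open>K\<close> and \<open>L\<close> would be two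
  circles of the pencil \<open>\<langle>a, K\<rangle>\<close> touching \<open>M\<close>, contradicting the uniqueness in axiom (C).
  Hence \<open>a\<close> lies on \<open>M\<close>, and a circle tangent to another one is tangent to it at every
  common point. Only axiom (C) is used, not the Laguerre plane axioms.\<close>

lemma tangent_at_refl: "p \<in> K \<Longrightarrow> tangent_at K K p"
  unfolding tangent_at_def by blast

lemma tangent_at_common_point:
  assumes "tangent K L" and "p \<in> K" and "p \<in> L"
  shows "tangent_at K L p"
proof -
  obtain q where "K \<inter> L = {q} \<or> K = L"
    using \<open>tangent K L\<close> unfolding tangent_def tangent_at_def by blast
  moreover have "p \<in> K \<inter> L"
    using assms(2,3) by (rule IntI)
  ultimately have "K \<inter> L = {p} \<or> K = L"
    by (metis singletonD)
  with \<open>p \<in> K\<close> show ?thesis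
    unfolding tangent_at_def by blast
qed

lemma axiom_C_pencil_touching_unique:
  assumes "axiom_C P C par" and "K \<in> C" and "L \<in> C" and "N \<in> C"
    and "tangent_at L K p" and "p \<notin> N"
    and "\<exists>x. K \<inter> N = {x}" and "\<exists>y. L \<inter> N = {y}"
  shows "K = L"
proof -
  have "p \<in> K"
    using \<open>tangent_at L K p\<close> unfolding tangent_at_def by blast
  with assms(1,2,4,6) have unique: "\<exists>!M. M \<in> pencil C p K \<and> (\<exists>x. M \<inter> N = {x})"
    unfolding axiom_C_def by simp
  have "K \<in> pencil C p K"
    using \<open>K \<in> C\<close> \<open>p \<in> K\<close> tangent_at_refl unfolding pencil_def by simp
  moreover have "L \<in> pencil C p K"
    using \<open>L \<in> C\<close> \<open>tangent_at L K p\<close> unfolding pencil_def by simp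
  ultimately show ?thesis
    using unique assms(7,8) by metis
qed

lemma axiom_C_touching_point_on_common_tangent:
  assumes "axiom_C P C par" and "K \<in> C" and "L \<in> C" and "M \<in> C"
    and KL: "K \<inter> L = {a}" and "K \<noteq> L" and "tangent K M" and "tangent L M"
  shows "a \<in> M"
proof (rule ccontr)
  assume "a \<notin> M"
  have "a \<in> K" and "a \<in> L"
    using KL by auto
  with \<open>a \<notin> M\<close> have "M \<noteq> K" and "M \<noteq> L"
    by auto
  then have "\<exists>x. K \<inter> M = {x}" and "\<exists>y. L \<inter> M = {y}"
    using \<open>tangent K M\<close> \<open>tangent L M\<close> unfolding tangent_def tangent_at_def by auto
  moreover have "tangent_at L K a"
    unfolding tangent_at_def Int_commute[of L K] using KL \<open>a \<in> L\<close> by simp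
  ultimately have "K = L"
    using axiom_C_pencil_touching_unique[OF assms(1-4) _ \<open>a \<notin> M\<close>] by blast
  with \<open>K \<noteq> L\<close> show False by contradiction
qed

theorem proposition2p1:
  fixes P :: "'p set" and C :: "'p set set" and par :: "'p \<Rightarrow> 'p \<Rightarrow> bool"
  assumes "laguerre_plane P C par"
    and "axiom_C P C par"
    and "K \<in> C" and "L \<in> C" and "M \<in> C"
    and "tangent K L" and "tangent L M" and "tangent K M"
  shows "\<exists>p. tangent_at K L p \<and> tangent_at L M p \<and> tangent_at K M p"
proof (cases "K = L")
  case True
  obtain p where "tangent_at L M p"
    using \<open>tangent L M\<close> unfolding tangent_def by blast
  then have "tangent_at K L p" "tangent_at K M p"
    using True tangent_at_refl unfolding tangent_at_def by simp_all
  with \<open>tangent_at L M p\<close> show ?thesis by blast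
next
  case False
  then obtain a where KL: "K \<inter> L = {a}"
    using \<open>tangent K L\<close> unfolding tangent_def tangent_at_def by blast
  then have "a \<in> K" and "a \<in> L"
    by auto
  moreover have "a \<in> M"
    using axiom_C_touching_point_on_common_tangent[OF assms(2-5) KL False assms(8,7)] .
  ultimately have "tangent_at K L a" "tangent_at L M a" "tangent_at K M a"
    using assms(6-8) by (simp_all add: tangent_at_common_point)
  then show ?thesis
    by blast
qed

end
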